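(* Let $d\ge1$ and let $D_d=\bigl(\binom{d-j}{d-i}\bigr)_{1\le i,j\le d}$, with the convention $\binom{r}{s}=0$ if $s<0$ or $s>r$ (so $D_d$ is lower unitriangular). For any $0\le m\le d-1$, the $(d-m)\times(d-m)$ matrix obtained from $D_d$ by deleting its last $m$ columns and any $m$ consecutive rows has determinant $1$.
   Context: Standard binomial coefficients; the only convention is $\binom{r}{s}=0$ for $s<0$ or $s>r$ with $r\ge0$. *)

theory Defs
  imports "Jordan_Normal_Form.Determinant"
begin

text \<open>The d x d matrix D_d with (1-based) entries binom(d-j, d-i), stored 0-based:
  entry (i,j) with 0 \<le> i,j < d corresponds to paper indices (i+1, j+1).
  Natural-number choose gives 0 when d-i > d-j, matching the convention.\<close>
definition D_mat :: "nat \<Rightarrow> int mat" where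
  "D_mat d = mat d d (\<lambda>(i, j). int ((d - (j + 1)) choose (d - (i + 1))))"

text \<open>Delete the last m columns and the m consecutive rows with (0-based) indices
  k, ..., k+m-1 (paper rows k+1..k+m). Remaining row i' maps to original row
  i' if i' < k and to i'+m otherwise.\<close>
definition del_minor :: "nat \<Rightarrow> nat \<Rightarrow> nat \<Rightarrow> int mat" where
  "del_minor d m k = mat (d - m) (d - m)
     (\<lambda>(i, j). D_mat d $$ (if i < k then i else i + m, j))"

end

theory Submission
  imports Defs
begin

text \<open>If the deleted block does not contain the first row, the minor has first
  row (1, 0, ..., 0), and expanding along it leaves the minor of D_(d-1) with the block moved
  up by one. If the block starts at the first row, subtracting each column from its
  predecessor turns every entry C(d-j, d-i) into C(d-j-1, d-i-1) by Pascal's rule, and the last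
  row becomes (0, ..., 0, 1); expanding along it leaves the same kind of minor of D_(d-1).\<close>

lemma det_unit_row:
  assumes A: "(A :: 'a :: comm_ring_1 mat) \<in> carrier_mat n n" and i: "i < n" and j: "j < n"
    and row: "\<And>l. l < n \<Longrightarrow> A $$ (i, l) = (if l = j then 1 else 0)"
  shows "det A = (-1) ^ (i + j) * det (mat_delete A i j)"
proof -
  have "det A = (\<Sum>l<n. A $$ (i, l) * cofactor A i l)"
    by (rule laplace_expansion_row[OF A i])
  also have "\<dots> = (\<Sum>l<n. if l = j then cofactor A i l else 0)"
    by (rule sum.cong) (auto simp: row)
  also have "\<dots> = cofactor A i j"
    using j by simp
  finally show ?thesis
    unfolding cofactor_def .
qed

definition col_diff_mat :: "nat \<Rightarrow> 'a :: comm_ring_1 mat" where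
  "col_diff_mat n = mat n n (\<lambda>(l, j). if l = j then 1 else if l = Suc j then -1 else 0)"

lemma col_diff_mat_carrier: "col_diff_mat n \<in> carrier_mat n n"
  by (simp add: col_diff_mat_def)

lemma det_col_diff_mat: "det (col_diff_mat n :: 'a :: comm_ring_1 mat) = 1"
proof -
  have "det (col_diff_mat n :: 'a mat) = prod_list (diag_mat (col_diff_mat n :: 'a mat))"
    by (rule det_lower_triangular[of n]) (auto simp: col_diff_mat_def)
  also have "\<dots> = 1"
    by (simp add: prod_list_diag_prod col_diff_mat_def)
  finally show ?thesis .
qed

lemma index_mult_col_diff_mat:
  assumes M: "(M :: 'a :: comm_ring_1 mat) \<in> carrier_mat n n" and i: "i < n" and j: "j < n"
  shows "(M * col_diff_mat n) $$ (i, j) = M $$ (i, j) - (if Suc j < n then M $$ (i, Suc j) else 0)"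
proof -
  have "(M * col_diff_mat n) $$ (i, j)
      = (\<Sum>l<n. (if l = j then M $$ (i, l) else 0) - (if l = Suc j then M $$ (i, l) else 0))"
    using M i j by (auto simp: scalar_prod_def col_diff_mat_def atLeast0LessThan
        intro!: sum.cong)
  also have "\<dots> = M $$ (i, j) - (if Suc j < n then M $$ (i, Suc j) else 0)"
    using j by (simp add: sum_subtractf)
  finally show ?thesis .
qed

lemma D_mat_first_row: "j < Suc d \<Longrightarrow> D_mat (Suc d) $$ (0, j) = (if j = 0 then 1 else 0)"
  by (simp add: D_mat_def)

lemma D_mat_col_diff:
  assumes "r < d" "j < d"
  shows "D_mat (Suc d) $$ (r, j) - D_mat (Suc d) $$ (r, Suc j) = D_mat d $$ (r, j)"
proof -
  obtain a where a: "d - j = Suc a"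
    using assms by (cases "d - j") auto
  obtain b where b: "d - r = Suc b"
    using assms by (cases "d - r") auto
  have "Suc d - (j + 1) = Suc a" "Suc d - (Suc j + 1) = a" "d - (j + 1) = a"
       "Suc d - (r + 1) = Suc b" "d - (r + 1) = b"
    using a b by auto
  with assms show ?thesis
    by (simp add: D_mat_def)
qed

lemma D_mat_last_row: "j < Suc d \<Longrightarrow> D_mat (Suc d) $$ (d, j) = 1"
  by (simp add: D_mat_def)

lemma del_minor_carrier: "del_minor d m k \<in> carrier_mat (d - m) (d - m)"
  by (simp add: del_minor_def)

lemma det_del_minor_Suc_shift:
  assumes k: "0 < k" and m: "m < Suc d"
  shows "det (del_minor (Suc d) m k) = det (del_minor d m (k - 1))"
proof -
  let ?M = "del_minor (Suc d) m k"
  have row: "?M $$ (0, j) = (if j = 0 then 1 else 0)" if "j < Suc d - m" for j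
    using that k by (simp add: del_minor_def D_mat_first_row)
  have "det ?M = det (mat_delete ?M 0 0)"
    using det_unit_row[OF del_minor_carrier _ _ row] m by simp
  also have "mat_delete ?M 0 0 = del_minor d m (k - 1)"
    by (rule eq_matI)
      (use k m in \<open>auto simp: mat_delete_def del_minor_def D_mat_def\<close>)
  finally show ?thesis .
qed

lemma det_del_minor_Suc_top:
  assumes m: "m < Suc d"
  shows "det (del_minor (Suc d) m 0) = det (del_minor d m 0)"
proof -
  let ?n = "Suc d - m"
  let ?M = "del_minor (Suc d) m 0"
  let ?A = "?M * col_diff_mat ?n"
  have A: "?A \<in> carrier_mat ?n ?n"
    using del_minor_carrier col_diff_mat_carrier by (rule mult_carrier_mat)
  have dims: "dim_row ?A = ?n" "dim_col ?A = ?n"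
    using A by auto
  have entry: "?A $$ (i, j) = D_mat (Suc d) $$ (i + m, j)
      - (if Suc j < ?n then D_mat (Suc d) $$ (i + m, Suc j) else 0)" if "i < ?n" "j < ?n" for i j
    using that by (simp add: index_mult_col_diff_mat[OF del_minor_carrier]) (simp add: del_minor_def)
  have "det ?M = det ?A"
    by (simp add: det_mult[OF del_minor_carrier col_diff_mat_carrier] det_col_diff_mat)
  also have "\<dots> = (-1) ^ (d - m + (d - m)) * det (mat_delete ?A (d - m) (d - m))"
    by (rule det_unit_row[OF A]) (use m in \<open>auto simp: entry D_mat_last_row\<close>)
  also have "mat_delete ?A (d - m) (d - m) = del_minor d m 0"
  proof (rule eq_matI)
    fix i j assume "i < dim_row (del_minor d m 0)" "j < dim_col (del_minor d m 0)"
    then have i: "i < d - m" and j: "j < d - m"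
      by (auto simp: del_minor_def)
    then have "mat_delete ?A (d - m) (d - m) $$ (i, j) = ?A $$ (i, j)"
      by (simp only: mat_delete_def dims index_mat) (use i j in simp)
    moreover have "Suc j < ?n"
      using j by linarith
    ultimately have "mat_delete ?A (d - m) (d - m) $$ (i, j) = D_mat d $$ (i + m, j)"
      using i j by (simp add: entry D_mat_col_diff)
    then show "mat_delete ?A (d - m) (d - m) $$ (i, j) = del_minor d m 0 $$ (i, j)"
      using i j by (simp add: del_minor_def)
  qed (use A m in \<open>auto simp: del_minor_def\<close>)
  finally show ?thesis
    by simp
qed

lemma det_del_minor: "k + m \<le> d \<Longrightarrow> det (del_minor d m k) = 1"
proof (induction d arbitrary: k)
  case 0
  then show ?case
    using del_minor_carrier[of 0 m k] by simp
next
  case (Suc d)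
  show ?case
  proof (cases "m = Suc d")
    case True
    then show ?thesis
      using del_minor_carrier[of "Suc d" m k] by simp
  next
    case False
    with Suc.prems have m: "m < Suc d"
      by simp
    show ?thesis
    proof (cases "k = 0")
      case True
      then show ?thesis
        using det_del_minor_Suc_top[OF m] Suc.IH[of 0] m by simp
    next
      case False
      then show ?thesis
        using det_del_minor_Suc_shift[OF _ m] Suc.IH[of "k - 1"] Suc.prems by simp
    qed
  qed
qed

theorem lemma5p11:
  fixes d m k :: nat
  assumes "d \<ge> 1" and "m \<le> d - 1" and "k + m \<le> d"
  shows "det (del_minor d m k) = 1"
  using det_del_minor[OF assms(3)] .

end
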